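(* Let $\alpha>1/2$, $\lambda>0$, $\tau\in(0,1)$, $X>0$ a.s. Let $Z$ be a standard normal random variable and $\gamma(\alpha-\frac12,\lambda)$ a gamma random variable with shape $\alpha-\frac12$ and rate $\lambda$, such that $Z,X,\gamma(\alpha-\frac12,\lambda)$ are independent. Then $$X_\tau\overset{\mathcal L}{=}(1-\tau)\gamma(\alpha-\tfrac12,\lambda)+\Big(\sqrt\tau\sqrt X+\sqrt{\tfrac{1-\tau}{2\lambda}}Z\Big)^2.$$
   Context: For $\tau\in(0,1)$, the gamma smart path $X_\tau$ is defined as follows: conditionally on $X=x$, let $K$ be Poisson with mean $\lambda\tau x/(1-\tau)$; conditionally on $X=x,K=k$, let $Y=0$ if $k=0$ and let $Y$ be gamma distributed with shape $k$ and rate $\lambda\tau/(1-\tau)$ if $k\ge1$; let $\gamma(\alpha,\lambda)$ be a random variable with density $\frac{\lambda^\alpha}{\Gamma(\alpha)}u^{\alpha-1}e^{-\lambda u}$ independent of $(X,K,Y)$; set $X_\tau=(1-\tau)\gamma(\alpha,\lambda)+\tau Y$. *)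

theory Defs
  imports "HOL-Probability.Probability"
begin

definition gamma_density :: "real \<Rightarrow> real \<Rightarrow> real \<Rightarrow> real" where
  "gamma_density a b u = (if 0 < u then b powr a / Gamma a * u powr (a - 1) * exp (- b * u) else 0)"

definition gamma_measure :: "real \<Rightarrow> real \<Rightarrow> real measure" where
  "gamma_measure a b = density lborel (\<lambda>u. ennreal (gamma_density a b u))"

definition poisson_law :: "real \<Rightarrow> nat measure" where
  "poisson_law m = measure_pmf (if 0 < m then poisson_pmf m else return_pmf 0)"

text \<open>Law of the gamma smart path X_tau, given the law mu of X (a probability measure on borel).\<close>
definition smart_path_law :: "real \<Rightarrow> real \<Rightarrow> real \<Rightarrow> real measure \<Rightarrow> real measure" where
  "smart_path_law \<alpha> lam \<tau> \<mu> =
     \<mu> \<bind> (\<lambda>x.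
     poisson_law (lam * \<tau> * x / (1 - \<tau>)) \<bind> (\<lambda>k.
     (if k = 0 then return borel 0 else gamma_measure (real k) (lam * \<tau> / (1 - \<tau>))) \<bind> (\<lambda>y.
     gamma_measure \<alpha> lam \<bind> (\<lambda>g.
     return borel ((1 - \<tau>) * g + \<tau> * y)))))"

end

theory Submission
  imports Defs
begin

text \<open>
  Conditionally on \<open>X = x\<close> and \<open>K = k\<close>, the smart path is the sum of the independent gamma
  variables \<open>(1 - \<tau>) \<gamma>(\<alpha>, \<lambda>)\<close> and \<open>\<tau> Y\<close>, i.e. it has law \<open>\<Gamma>(\<alpha> + k, \<lambda> / (1 - \<tau>))\<close>; hence, given
  \<open>X = x\<close>, \<open>X\<^sub>\<tau>\<close> is a Poisson mixture of gamma laws with mixing mean \<open>\<lambda>\<tau>x / (1 - \<tau>)\<close>.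
  On the other side, expanding \<open>cosh\<close> in the density of the square of a normal variable with mean
  \<open>c\<close> and variance \<open>\<sigma>\<^sup>2\<close> shows that it is the Poisson mixture of \<open>\<Gamma>(1/2 + k, 1 / (2 \<sigma>\<^sup>2))\<close> with mean
  \<open>c\<^sup>2 / (2 \<sigma>\<^sup>2)\<close> (a scaled noncentral \<open>\<chi>\<^sup>2\<close> law). Adding the independent
  \<open>(1 - \<tau>) \<gamma>(\<alpha> - 1/2, \<lambda>)\<close> raises every shape by \<open>\<alpha> - 1/2\<close>, which yields the same mixture.
  Both sides therefore have the same conditional law given \<open>X\<close>.
\<close>

subsection \<open>Gamma laws\<close>

lemma gamma_density_nonneg: "0 < a \<Longrightarrow> 0 \<le> gamma_density a b u"
  unfolding gamma_density_def by auto

lemma borel_measurable_gamma_density[measurable]: "gamma_density a b \<in> borel_measurable borel"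
  unfolding gamma_density_def[abs_def] by measurable

lemma sets_gamma_measure[simp, measurable_cong]: "sets (gamma_measure a b) = sets borel"
  by (simp add: gamma_measure_def)

lemma space_gamma_measure[simp]: "space (gamma_measure a b) = UNIV"
  by (simp add: gamma_measure_def)

lemma gamma_density_rescale:
  assumes "0 < b" "0 < c"
  shows "c * gamma_density a (b / c) (c * u) = gamma_density a b u"
proof (cases "u > 0")
  case True
  have e: "c powr a = c * c powr (a - 1)" using assms by (simp add: powr_diff)
  have "c * gamma_density a (b / c) (c * u) = (c * c powr (a - 1) / c powr a) * gamma_density a b u"
    using assms True
    by (simp add: gamma_density_def powr_divide powr_mult zero_less_mult_iff field_simps)
  also have "c * c powr (a - 1) / c powr a = 1" using assms by (simp add: e[symmetric])
  finally show ?thesis by simp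
qed (use assms in \<open>auto simp: gamma_density_def zero_less_mult_iff\<close>)

lemma distr_mult_gamma_measure:
  assumes "0 < b" "0 < c"
  shows "distr (gamma_measure a b) borel (\<lambda>x. c * x) = gamma_measure a (b / c)"
proof (rule measure_eqI)
  fix A :: "real set" assume "A \<in> sets (distr (gamma_measure a b) borel (\<lambda>x. c * x))"
  then have A[measurable]: "A \<in> sets borel" by simp
  have [measurable]: "(*) c -` A \<in> sets borel" by (rule measurable_sets_borel[OF _ A]) simp
  have "emeasure (distr (gamma_measure a b) borel (\<lambda>x. c * x)) A
      = (\<integral>\<^sup>+u. ennreal (gamma_density a b u) * indicator A (c * u) \<partial>lborel)"
    unfolding gamma_measure_def
    by (subst emeasure_distr, simp, simp, subst emeasure_density)
       (auto intro!: nn_integral_cong split: split_indicator)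
  also have "\<dots> = (\<integral>\<^sup>+u. ennreal c * (ennreal (gamma_density a (b / c) (0 + c * u)) * indicator A (0 + c * u)) \<partial>lborel)"
    using assms
    by (intro nn_integral_cong) (simp add: ennreal_mult'[symmetric] gamma_density_rescale mult.assoc[symmetric])
  also have "\<dots> = ennreal \<bar>c\<bar> * (\<integral>\<^sup>+u. ennreal (gamma_density a (b / c) (0 + c * u)) * indicator A (0 + c * u) \<partial>lborel)"
    using assms by (subst nn_integral_cmult) auto
  also have "\<dots> = (\<integral>\<^sup>+v. ennreal (gamma_density a (b / c) v) * indicator A v \<partial>lborel)"
    using assms by (intro nn_integral_real_affine[symmetric]) auto
  also have "\<dots> = emeasure (gamma_measure a (b / c)) A"
    unfolding gamma_measure_def by (simp add: emeasure_density)
  finally show "emeasure (distr (gamma_measure a b) borel (\<lambda>x. c * x)) A = emeasure (gamma_measure a (b / c)) A" .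
qed simp

lemma prob_space_gamma_measure:
  assumes a: "0 < a" and b: "0 < b"
  shows "prob_space (gamma_measure a b)"
proof -
  have "(\<integral>\<^sup>+u. ennreal (gamma_density a 1 u) \<partial>lborel)
      = (\<integral>\<^sup>+u. ennreal (indicator {0..} u * u powr (a - 1) / exp u) * ennreal (1 / Gamma a) \<partial>lborel)"
    using a Gamma_real_pos[OF a]
    by (intro nn_integral_cong)
       (auto simp: gamma_density_def ennreal_mult'[symmetric] exp_minus field_simps indicator_def)
  also have "\<dots> = ennreal (Gamma a) * ennreal (1 / Gamma a)"
    by (subst nn_integral_multc) (auto simp: Gamma_conv_nn_integral_real[OF a])
  also have "\<dots> = 1"
    using Gamma_real_pos[OF a] by (simp add: ennreal_mult[symmetric])
  finally have "prob_space (gamma_measure a 1)"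
    unfolding gamma_measure_def by (intro prob_spaceI) (simp add: emeasure_density)
  then have "prob_space (distr (gamma_measure a 1) borel (\<lambda>x. (1 / b) * x))"
    by (rule prob_space.prob_space_distr) simp
  also have "distr (gamma_measure a 1) borel (\<lambda>x. (1 / b) * x) = gamma_measure a b"
    using distr_mult_gamma_measure[of 1 "1 / b" a] b by simp
  finally show ?thesis .
qed

lemma gamma_measure_in_subprob_algebra:
  "0 < a \<Longrightarrow> 0 < b \<Longrightarrow> gamma_measure a b \<in> space (subprob_algebra borel)"
  by (simp add: space_subprob_algebra prob_space_imp_subprob_space prob_space_gamma_measure)


lemma gamma_density_product_rescaled:
  assumes u: "0 < u"
  shows "u * (gamma_density a b (u - u * t) * gamma_density c b (u * t)) =
         (b powr (a + c) / (Gamma a * Gamma c) * u powr (a + c - 1) * exp (- b * u))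
           * (indicator {0..1} t * (t powr (c - 1) * (1 - t) powr (a - 1)))"
proof -
  consider "t \<le> 0" | "0 < t" "t < 1" | "1 \<le> t" by linarith
  then show ?thesis
  proof cases
    case 1
    then have "u * t \<le> 0" using u by (simp add: mult_nonneg_nonpos)
    then show ?thesis using 1 by (cases "t = 0") (auto simp: gamma_density_def indicator_def)
  next
    case 2
    have e1: "(u - u * t) powr (a - 1) = u powr (a - 1) * (1 - t) powr (a - 1)"
      using u 2 by (subst powr_mult[symmetric]) (auto simp: algebra_simps)
    have e2: "(u * t) powr (c - 1) = u powr (c - 1) * t powr (c - 1)"
      using u 2 by (subst powr_mult) auto
    have e3: "u powr (a + c - 1) = u * (u powr (a - 1) * u powr (c - 1))"
    proof -
      have "u powr (a + c - 1) = u powr ((a - 1) + (c - 1) + 1)" by simp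
      also have "\<dots> = u powr (a - 1) * u powr (c - 1) * u" using u by (simp only: powr_add powr_one)
      finally show ?thesis by simp
    qed
    have e4: "exp (- b * (u - u * t)) * exp (- b * (u * t)) = exp (- b * u)"
      by (simp add: exp_add[symmetric] algebra_simps)
    have "u * (gamma_density a b (u - u * t) * gamma_density c b (u * t)) =
          u * (b powr a / Gamma a * (u - u * t) powr (a - 1) * exp (- b * (u - u * t)) *
               (b powr c / Gamma c * (u * t) powr (c - 1) * exp (- b * (u * t))))"
      using u 2 by (simp add: gamma_density_def algebra_simps)
    also have "\<dots> = (b powr a * b powr c / (Gamma a * Gamma c)) * (u * (u powr (a - 1) * u powr (c - 1)))
          * (exp (- b * (u - u * t)) * exp (- b * (u * t))) * (t powr (c - 1) * (1 - t) powr (a - 1))"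
      unfolding e1 e2 by (simp add: field_simps)
    also have "\<dots> = (b powr (a + c) / (Gamma a * Gamma c) * u powr (a + c - 1) * exp (- b * u))
                    * (t powr (c - 1) * (1 - t) powr (a - 1))"
      unfolding e3 e4 by (simp add: powr_add)
    finally show ?thesis using 2 by (simp add: indicator_def)
  next
    case 3
    then have "u - u * t \<le> 0" using u mult_left_mono[of 1 t u] by simp
    then show ?thesis using 3 by (cases "t = 1") (auto simp: gamma_density_def indicator_def)
  qed
qed

text \<open>The substitution \<open>y = u t\<close> turns the convolution integral into a Beta integral.\<close>
lemma gamma_density_convolution:
  assumes a: "0 < a" and c: "0 < c"
  shows "(\<integral>\<^sup>+y. ennreal (gamma_density a b (u - y)) * ennreal (gamma_density c b y) \<partial>lborel)
         = ennreal (gamma_density (a + c) b u)"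
proof (cases "u > 0")
  case False
  then have "(\<lambda>y. ennreal (gamma_density a b (u - y)) * ennreal (gamma_density c b y)) = (\<lambda>y. 0)"
    by (auto simp: gamma_density_def fun_eq_iff)
  then show ?thesis using False by (simp add: gamma_density_def)
next
  case u: True
  define C where "C = b powr (a + c) / (Gamma a * Gamma c) * u powr (a + c - 1) * exp (- b * u)"
  define B where "B = (\<lambda>t. indicator {0..1} t * (t powr (c - 1) * (1 - t) powr (a - 1)) :: real)"
  have C: "0 \<le> C" using a c unfolding C_def by simp
  have B: "0 \<le> B t" for t unfolding B_def by (simp add: indicator_def)
  have "(\<integral>\<^sup>+y. ennreal (gamma_density a b (u - y)) * ennreal (gamma_density c b y) \<partial>lborel)
     = ennreal \<bar>u\<bar> * (\<integral>\<^sup>+t. ennreal (gamma_density a b (u - (0 + u * t))) * ennreal (gamma_density c b (0 + u * t)) \<partial>lborel)"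
    using u by (intro nn_integral_real_affine) auto
  also have "\<dots> = (\<integral>\<^sup>+t. ennreal (u * (gamma_density a b (u - u * t) * gamma_density c b (u * t))) \<partial>lborel)"
    using u gamma_density_nonneg[OF a] gamma_density_nonneg[OF c]
    by (subst nn_integral_cmult[symmetric]) (auto simp: ennreal_mult)
  also have "\<dots> = (\<integral>\<^sup>+t. ennreal C * ennreal (B t) \<partial>lborel)"
  proof (intro nn_integral_cong)
    fix t
    have "u * (gamma_density a b (u - u * t) * gamma_density c b (u * t)) = C * B t"
      unfolding C_def B_def by (rule gamma_density_product_rescaled[OF u])
    then show "ennreal (u * (gamma_density a b (u - u * t) * gamma_density c b (u * t))) = ennreal C * ennreal (B t)"
      by (simp add: ennreal_mult[OF C B])
  qed
  also have "\<dots> = ennreal C * ennreal (Beta c a)"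
    using nn_integral_has_integral_lebesgue[OF _ has_integral_Beta_real[OF c a]]
    by (subst nn_integral_cmult) (auto simp: B_def)
  also have "\<dots> = ennreal (gamma_density (a + c) b u)"
  proof -
    have "Gamma a \<noteq> 0" "Gamma c \<noteq> 0" "Gamma (c + a) \<noteq> 0"
      using Gamma_real_pos[OF a] Gamma_real_pos[OF c] Gamma_real_pos[of "c + a"] a c by linarith+
    then have "C * Beta c a = gamma_density (a + c) b u"
      using u unfolding C_def Beta_def gamma_density_def by (simp add: field_simps add.commute)
    moreover have "0 \<le> Beta c a" using a c by (simp add: Beta_def)
    ultimately show ?thesis using C by (simp add: ennreal_mult[symmetric])
  qed
  finally show ?thesis .
qed

lemma convolution_gamma_measure:
  assumes "0 < a" "0 < c" "0 < b"
  shows "gamma_measure a b \<star> gamma_measure c b = gamma_measure (a + c) b"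
  unfolding gamma_measure_def
  using prob_space_gamma_measure[of a b] prob_space_gamma_measure[of c b] assms
  by (subst convolution_density)
     (auto simp: gamma_measure_def prob_space.finite_measure gamma_density_convolution)


subsection \<open>Poisson mixtures of gamma laws\<close>

definition poisson_weight :: "real \<Rightarrow> nat \<Rightarrow> real" where
  "poisson_weight m k = exp (- m) * m ^ k / fact k"

definition poisson_gamma_density :: "real \<Rightarrow> real \<Rightarrow> real \<Rightarrow> real \<Rightarrow> ennreal" where
  "poisson_gamma_density a \<beta> m u = (\<Sum>k. ennreal (poisson_weight m k * gamma_density (a + real k) \<beta> u))"

lemma poisson_weight_nonneg: "0 \<le> m \<Longrightarrow> 0 \<le> poisson_weight m k"
  unfolding poisson_weight_def by simp

lemma suminf_poisson_weight:
  assumes "0 \<le> m"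
  shows "(\<Sum>k. ennreal (poisson_weight m k)) = 1"
proof -
  have "(\<lambda>k. exp (- m) * (m ^ k /\<^sub>R fact k)) sums (exp (- m) * exp m)"
    by (rule sums_mult[OF exp_converges])
  then have "(\<lambda>k. poisson_weight m k) sums 1"
    by (simp add: poisson_weight_def exp_minus divide_inverse ac_simps)
  then show ?thesis
    using assms by (subst suminf_ennreal_eq[where x=1]) (auto intro: poisson_weight_nonneg)
qed

lemma pmf_poisson_law:
  "pmf (if 0 < m then poisson_pmf m else return_pmf 0) k = poisson_weight (max 0 m) k"
  by (cases k) (auto simp: poisson_weight_def indicator_def max_def)

lemma borel_measurable_poisson_gamma_density[measurable]:
  "poisson_gamma_density a \<beta> m \<in> borel_measurable borel"
  unfolding poisson_gamma_density_def[abs_def] by measurable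

lemma emeasure_poisson_gamma_density:
  assumes a: "0 < a" and m: "0 \<le> m" and A[measurable]: "A \<in> sets borel"
  shows "emeasure (density lborel (poisson_gamma_density a \<beta> m)) A =
         (\<Sum>k. ennreal (poisson_weight m k) * emeasure (gamma_measure (a + real k) \<beta>) A)"
proof -
  have "emeasure (density lborel (poisson_gamma_density a \<beta> m)) A
      = (\<integral>\<^sup>+u. (\<Sum>k. ennreal (poisson_weight m k * gamma_density (a + real k) \<beta> u) * indicator A u) \<partial>lborel)"
    by (simp add: emeasure_density poisson_gamma_density_def)
  also have "\<dots> = (\<Sum>k. \<integral>\<^sup>+u. ennreal (poisson_weight m k * gamma_density (a + real k) \<beta> u) * indicator A u \<partial>lborel)"
    by (rule nn_integral_suminf) simp
  also have "\<dots> = (\<Sum>k. \<integral>\<^sup>+u. ennreal (poisson_weight m k) * (ennreal (gamma_density (a + real k) \<beta> u) * indicator A u) \<partial>lborel)"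
    using a m
    by (intro suminf_cong nn_integral_cong)
       (simp add: ennreal_mult poisson_weight_nonneg gamma_density_nonneg mult.assoc)
  also have "\<dots> = (\<Sum>k. ennreal (poisson_weight m k) * emeasure (gamma_measure (a + real k) \<beta>) A)"
    by (subst nn_integral_cmult) (simp_all add: gamma_measure_def emeasure_density)
  finally show ?thesis .
qed

lemma prob_space_poisson_gamma_density:
  assumes a: "0 < a" and b: "0 < \<beta>" and m: "0 \<le> m"
  shows "prob_space (density lborel (poisson_gamma_density a \<beta> m))"
proof (rule prob_spaceI)
  have "emeasure (gamma_measure (a + real k) \<beta>) UNIV = 1" for k
    using prob_space.emeasure_space_1[OF prob_space_gamma_measure[of "a + real k" \<beta>]] a b by simp
  then show "emeasure (density lborel (poisson_gamma_density a \<beta> m)) (space (density lborel (poisson_gamma_density a \<beta> m))) = 1"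
    using a m by (simp add: emeasure_poisson_gamma_density suminf_poisson_weight)
qed

lemma measurable_poisson_gamma_density_kernel:
  assumes a: "0 < a" and b: "0 < \<beta>"
    and h[measurable]: "h \<in> borel_measurable N" and h_nonneg: "\<And>x. 0 \<le> h x"
  shows "(\<lambda>x. density lborel (poisson_gamma_density a \<beta> (h x))) \<in> N \<rightarrow>\<^sub>M subprob_algebra borel"
proof (rule measurable_subprob_algebra)
  fix x
  show "subprob_space (density lborel (poisson_gamma_density a \<beta> (h x)))"
    using a b h_nonneg by (simp add: prob_space_imp_subprob_space prob_space_poisson_gamma_density)
next
  fix A :: "real set" assume A[measurable]: "A \<in> sets borel"
  have "(\<lambda>x. \<Sum>k. ennreal (poisson_weight (h x) k) * emeasure (gamma_measure (a + real k) \<beta>) A)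
        \<in> borel_measurable N"
    unfolding poisson_weight_def by measurable
  then show "(\<lambda>x. emeasure (density lborel (poisson_gamma_density a \<beta> (h x))) A) \<in> borel_measurable N"
    using a h_nonneg by (simp add: emeasure_poisson_gamma_density)
qed simp

lemma poisson_law_bind_gamma_measure:
  assumes a: "0 < a" and b: "0 < \<beta>"
  shows "poisson_law m \<bind> (\<lambda>k. gamma_measure (a + real k) \<beta>) = density lborel (poisson_gamma_density a \<beta> (max 0 m))"
proof (rule measure_eqI)
  have G: "(\<lambda>k. gamma_measure (a + real k) \<beta>) \<in> poisson_law m \<rightarrow>\<^sub>M subprob_algebra borel"
    using gamma_measure_in_subprob_algebra a b by (simp add: poisson_law_def)
  show "sets (poisson_law m \<bind> (\<lambda>k. gamma_measure (a + real k) \<beta>)) = sets (density lborel (poisson_gamma_density a \<beta> (max 0 m)))"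
    by (subst sets_bind) (auto simp: poisson_law_def)
  fix A assume "A \<in> sets (poisson_law m \<bind> (\<lambda>k. gamma_measure (a + real k) \<beta>))"
  then have A[measurable]: "A \<in> sets borel" by (subst (asm) sets_bind) (auto simp: poisson_law_def)
  have "emeasure (poisson_law m \<bind> (\<lambda>k. gamma_measure (a + real k) \<beta>)) A
      = (\<integral>\<^sup>+k. emeasure (gamma_measure (a + real k) \<beta>) A \<partial>poisson_law m)"
    by (rule emeasure_bind[OF _ G]) (auto simp: poisson_law_def)
  also have "\<dots> = (\<Sum>k. ennreal (poisson_weight (max 0 m) k) * emeasure (gamma_measure (a + real k) \<beta>) A)"
    unfolding poisson_law_def
    by (simp add: nn_integral_measure_pmf nn_integral_count_space_nat pmf_poisson_law)
  also have "\<dots> = emeasure (density lborel (poisson_gamma_density a \<beta> (max 0 m))) A"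
    using a by (simp add: emeasure_poisson_gamma_density)
  finally show "emeasure (poisson_law m \<bind> (\<lambda>k. gamma_measure (a + real k) \<beta>)) A
      = emeasure (density lborel (poisson_gamma_density a \<beta> (max 0 m))) A" .
qed

lemma convolution_poisson_gamma_density:
  assumes a: "0 < a" and c: "0 < c" and b: "0 < \<beta>" and m: "0 \<le> m"
  shows "density lborel (poisson_gamma_density a \<beta> m) \<star> gamma_measure c \<beta>
         = density lborel (poisson_gamma_density (a + c) \<beta> m)"
proof -
  have "density lborel (poisson_gamma_density a \<beta> m) \<star> gamma_measure c \<beta> =
        density lborel (\<lambda>x. \<integral>\<^sup>+y. poisson_gamma_density a \<beta> m (x - y) * ennreal (gamma_density c \<beta> y) \<partial>lborel)"
    unfolding gamma_measure_def
    using prob_space_poisson_gamma_density[OF a b m] prob_space_gamma_measure[OF c b]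
    by (intro convolution_density) (simp_all add: prob_space.finite_measure gamma_measure_def)
  also have "\<dots> = density lborel (poisson_gamma_density (a + c) \<beta> m)"
  proof (rule density_cong[OF _ _ AE_I2])
    fix x :: real
    have "(\<integral>\<^sup>+y. poisson_gamma_density a \<beta> m (x - y) * ennreal (gamma_density c \<beta> y) \<partial>lborel)
        = (\<integral>\<^sup>+y. (\<Sum>k. ennreal (poisson_weight m k * gamma_density (a + real k) \<beta> (x - y)) * ennreal (gamma_density c \<beta> y)) \<partial>lborel)"
      unfolding poisson_gamma_density_def by simp
    also have "\<dots> = (\<Sum>k. \<integral>\<^sup>+y. ennreal (poisson_weight m k) * (ennreal (gamma_density (a + real k) \<beta> (x - y)) * ennreal (gamma_density c \<beta> y)) \<partial>lborel)"
      using a m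
      by (subst nn_integral_suminf[symmetric])
         (auto intro!: nn_integral_cong simp: ennreal_mult poisson_weight_nonneg gamma_density_nonneg mult.assoc)
    also have "\<dots> = (\<Sum>k. ennreal (poisson_weight m k) * ennreal (gamma_density (a + real k + c) \<beta> x))"
      using a c by (simp add: nn_integral_cmult gamma_density_convolution add_pos_nonneg)
    also have "\<dots> = poisson_gamma_density (a + c) \<beta> m x"
      unfolding poisson_gamma_density_def using a c m
      by (intro suminf_cong) (simp add: ennreal_mult poisson_weight_nonneg gamma_density_nonneg ac_simps)
    finally show "(\<integral>\<^sup>+y. poisson_gamma_density a \<beta> m (x - y) * ennreal (gamma_density c \<beta> y) \<partial>lborel)
        = poisson_gamma_density (a + c) \<beta> m x" .
  qed simp_all
  finally show ?thesis .
qed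


subsection \<open>Squares of normal variables\<close>

lemma tendsto_nn_integral_indicator_atLeastAtMost:
  fixes F :: "real \<Rightarrow> ennreal" and h :: "nat \<Rightarrow> real"
  assumes [measurable]: "F \<in> borel_measurable borel" and h: "incseq h" "filterlim h at_top sequentially"
  shows "(\<lambda>n. \<integral>\<^sup>+x. F x * indicator {0..h n} x \<partial>lborel) \<longlonglongrightarrow> (\<integral>\<^sup>+x. F x * indicator {0..} x \<partial>lborel)"
proof (intro nn_integral_LIMSEQ)
  show "incseq (\<lambda>n x. F x * indicator {0..h n} x)"
    using h(1) by (auto simp: incseq_def le_fun_def intro!: mult_left_mono split: split_indicator)
       (meson order_trans)
  fix x :: real
  show "(\<lambda>n. F x * indicator {0..h n} x) \<longlonglongrightarrow> F x * indicator {0..} x"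
  proof (cases "0 \<le> x")
    case True
    have "eventually (\<lambda>n. x \<le> h n) sequentially"
      using h(2) by (simp add: filterlim_at_top)
    then have "eventually (\<lambda>n. F x * indicator {0..h n} x = F x * indicator {0..} x) sequentially"
      by eventually_elim (use True in \<open>auto simp: indicator_def\<close>)
    then show ?thesis by (rule tendsto_eventually)
  qed (auto simp: indicator_def)
qed auto

lemma nn_integral_substitution_square:
  fixes G :: "real \<Rightarrow> ennreal"
  assumes [measurable]: "G \<in> borel_measurable borel"
  shows "(\<integral>\<^sup>+w. G w * indicator {0..} w \<partial>lborel) = (\<integral>\<^sup>+v. G (v\<^sup>2) * ennreal (2 * v) * indicator {0..} v \<partial>lborel)"
proof (rule LIMSEQ_unique)
  let ?h = "\<lambda>n::nat. real (Suc n)"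
  have hinc: "incseq ?h" by (auto simp: incseq_def)
  have hlim: "filterlim ?h at_top sequentially"
    by (rule filterlim_compose[OF filterlim_real_sequentially]) (rule filterlim_Suc)
  have h2inc: "incseq (\<lambda>n. (?h n)\<^sup>2)" by (auto simp: incseq_def intro!: power_mono)
  have h2lim: "filterlim (\<lambda>n. (?h n)\<^sup>2) at_top sequentially"
    by (rule filterlim_compose[OF filterlim_pow_at_top[of 2 "\<lambda>x. x" at_top] hlim]) (auto simp: filterlim_ident)
  show "(\<lambda>n. \<integral>\<^sup>+w. G w * indicator {0..(?h n)\<^sup>2} w \<partial>lborel) \<longlonglongrightarrow> (\<integral>\<^sup>+w. G w * indicator {0..} w \<partial>lborel)"
    by (rule tendsto_nn_integral_indicator_atLeastAtMost[OF _ h2inc h2lim]) simp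
  have "(\<integral>\<^sup>+w. G w * indicator {(\<lambda>x. x\<^sup>2) 0..(\<lambda>x. x\<^sup>2) (?h n)} w \<partial>lborel) =
        (\<integral>\<^sup>+v. G ((\<lambda>x. x\<^sup>2) v) * ennreal (2 * v) * indicator {0..?h n} v \<partial>lborel)" for n
    by (rule nn_integral_substitution_aux[where g="\<lambda>x. x\<^sup>2" and g'="\<lambda>x. 2 * x"])
       (auto intro!: derivative_eq_intros continuous_intros)
  then have eq: "(\<integral>\<^sup>+w. G w * indicator {0..(?h n)\<^sup>2} w \<partial>lborel) =
                 (\<integral>\<^sup>+v. G (v\<^sup>2) * ennreal (2 * v) * indicator {0..?h n} v \<partial>lborel)" for n
    by simp
  show "(\<lambda>n. \<integral>\<^sup>+w. G w * indicator {0..(?h n)\<^sup>2} w \<partial>lborel) \<longlonglongrightarrow> (\<integral>\<^sup>+v. G (v\<^sup>2) * ennreal (2 * v) * indicator {0..} v \<partial>lborel)"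
    unfolding eq by (rule tendsto_nn_integral_indicator_atLeastAtMost[OF _ hinc hlim]) simp
qed

definition square_density :: "(real \<Rightarrow> real) \<Rightarrow> real \<Rightarrow> real" where
  "square_density f w = (if w > 0 then (f (sqrt w) + f (- sqrt w)) / (2 * sqrt w) else 0)"

lemma borel_measurable_square_density[measurable]:
  assumes [measurable]: "f \<in> borel_measurable borel"
  shows "square_density f \<in> borel_measurable borel"
  unfolding square_density_def[abs_def] by measurable

lemma square_density_nonneg: "(\<And>x. 0 \<le> f x) \<Longrightarrow> 0 \<le> square_density f w"
  unfolding square_density_def by auto

lemma nn_integral_lborel_fold_at_0:
  fixes F :: "real \<Rightarrow> ennreal"
  assumes [measurable]: "F \<in> borel_measurable borel"
  shows "(\<integral>\<^sup>+v. F v \<partial>lborel) = (\<integral>\<^sup>+v. (F v + F (- v)) * indicator {0..} v \<partial>lborel)"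
proof -
  have "(\<integral>\<^sup>+v. F v \<partial>lborel) = (\<integral>\<^sup>+v. F v * indicator {0..} v + F v * indicator {..<0} v \<partial>lborel)"
    by (intro nn_integral_cong) (auto split: split_indicator)
  also have "\<dots> = (\<integral>\<^sup>+v. F v * indicator {0..} v \<partial>lborel) + (\<integral>\<^sup>+v. F v * indicator {..<0} v \<partial>lborel)"
    by (rule nn_integral_add) auto
  also have "(\<integral>\<^sup>+v. F v * indicator {..<0} v \<partial>lborel)
      = ennreal \<bar>-1\<bar> * (\<integral>\<^sup>+v. F (0 + -1 * v) * indicator {..<0} (0 + -1 * v) \<partial>lborel)"
    by (intro nn_integral_real_affine) auto
  also have "\<dots> = (\<integral>\<^sup>+v. F (- v) * indicator {0<..} v \<partial>lborel)"
    by (auto intro!: nn_integral_cong split: split_indicator)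
  also have "\<dots> = (\<integral>\<^sup>+v. F (- v) * indicator {0..} v \<partial>lborel)"
    by (intro nn_integral_cong_AE eventually_mono[OF AE_lborel_singleton[of 0]])
       (auto split: split_indicator)
  also have "(\<integral>\<^sup>+v. F v * indicator {0..} v \<partial>lborel) + \<dots> = (\<integral>\<^sup>+v. (F v + F (- v)) * indicator {0..} v \<partial>lborel)"
    by (subst nn_integral_add[symmetric]) (auto simp: distrib_right)
  finally show ?thesis .
qed

lemma distr_square_density:
  fixes f :: "real \<Rightarrow> real"
  assumes f[measurable]: "f \<in> borel_measurable borel" and nn: "\<And>x. 0 \<le> f x"
  shows "distr (density lborel (\<lambda>v. ennreal (f v))) borel (\<lambda>v. v\<^sup>2) = density lborel (\<lambda>w. ennreal (square_density f w))"
proof (rule measure_eqI)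
  fix A :: "real set" assume "A \<in> sets (distr (density lborel (\<lambda>v. ennreal (f v))) borel (\<lambda>v. v\<^sup>2))"
  then have A[measurable]: "A \<in> sets borel" by simp
  have [measurable]: "(\<lambda>v. v\<^sup>2) -` A \<in> sets borel" by (rule measurable_sets_borel[OF _ A]) simp
  have "emeasure (distr (density lborel (\<lambda>v. ennreal (f v))) borel (\<lambda>v. v\<^sup>2)) A
      = (\<integral>\<^sup>+v. ennreal (f v) * indicator A (v\<^sup>2) \<partial>lborel)"
    by (subst emeasure_distr, simp, simp, subst emeasure_density)
       (auto intro!: nn_integral_cong split: split_indicator)
  also have "\<dots> = (\<integral>\<^sup>+v. (ennreal (f v) + ennreal (f (- v))) * indicator A (v\<^sup>2) * indicator {0..} v \<partial>lborel)"
    by (subst nn_integral_lborel_fold_at_0) (simp_all add: distrib_right)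
  also have "\<dots> = (\<integral>\<^sup>+v. (ennreal (square_density f (v\<^sup>2)) * indicator A (v\<^sup>2)) * ennreal (2 * v) * indicator {0..} v \<partial>lborel)"
  proof (intro nn_integral_cong_AE eventually_mono[OF AE_lborel_singleton[of 0]])
    fix v :: real assume "v \<noteq> 0"
    show "(ennreal (f v) + ennreal (f (- v))) * indicator A (v\<^sup>2) * indicator {0..} v
        = (ennreal (square_density f (v\<^sup>2)) * indicator A (v\<^sup>2)) * ennreal (2 * v) * indicator {0..} v"
    proof (cases "v > 0")
      case True
      have "square_density f (v\<^sup>2) * (2 * v) = f v + f (- v)"
        using True by (simp add: square_density_def)
      then have "ennreal (square_density f (v\<^sup>2)) * ennreal (2 * v) = ennreal (f v) + ennreal (f (- v))"
        using True nn square_density_nonneg[of f, OF nn]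
        by (simp add: ennreal_mult[symmetric] ennreal_plus[symmetric] del: ennreal_plus)
      then show ?thesis using True by (auto simp: indicator_def algebra_simps)
    qed (use \<open>v \<noteq> 0\<close> in auto)
  qed
  also have "\<dots> = (\<integral>\<^sup>+w. (ennreal (square_density f w) * indicator A w) * indicator {0..} w \<partial>lborel)"
    by (rule nn_integral_substitution_square[symmetric]) simp
  also have "\<dots> = emeasure (density lborel (\<lambda>w. ennreal (square_density f w))) A"
    by (auto simp: emeasure_density square_density_def intro!: nn_integral_cong split: split_indicator)
  finally show "emeasure (distr (density lborel (\<lambda>v. ennreal (f v))) borel (\<lambda>v. v\<^sup>2)) A =
                emeasure (density lborel (\<lambda>w. ennreal (square_density f w))) A" .
qed simp

lemma Gamma_nat_plus_half: "Gamma (real k + 1/2) = sqrt pi * fact (2 * k) / (4 ^ k * fact k)"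
proof (induction k)
  case 0
  then show ?case by (simp add: Gamma_one_half_real)
next
  case (Suc k)
  have "real k + 1/2 \<notin> \<int>\<^sub>\<le>\<^sub>0" using nonpos_Ints_nonpos by force
  then have "Gamma (real (Suc k) + 1/2) = (real k + 1/2) * Gamma (real k + 1/2)"
    using Gamma_plus1[of "real k + 1/2"] by (simp add: algebra_simps)
  also have "\<dots> = (real k + 1/2) * (sqrt pi * fact (2 * k) / (4 ^ k * fact k))"
    by (simp add: Suc.IH)
  also have "\<dots> = sqrt pi * fact (Suc (Suc (2 * k))) / (4 ^ Suc k * fact (Suc k))"
    by (simp add: divide_simps) (simp add: algebra_simps)
  finally show ?case by simp
qed

lemma sums_cosh_even: "(\<lambda>k. y ^ (2 * k) / fact (2 * k)) sums cosh (y::real)"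
proof -
  have "(\<lambda>n. if even n then y ^ n /\<^sub>R fact n else 0) sums cosh y" by (rule cosh_converges)
  then have "(\<lambda>k. (\<lambda>n. if even n then y ^ n /\<^sub>R fact n else 0) (2 * k)) sums cosh y"
    by (subst sums_mono_reindex) (auto simp: strict_mono_def image_def elim!: oddE evenE)
  then show ?thesis by (simp add: divide_inverse mult.commute)
qed

lemma normal_cosh_term_eq_poisson_gamma:
  assumes w: "0 < w" and s: "0 < \<sigma>"
  shows "exp (- (w + c\<^sup>2) / (2 * \<sigma>\<^sup>2)) / (sqrt (2 * pi * \<sigma>\<^sup>2) * sqrt w) * ((c * sqrt w / \<sigma>\<^sup>2) ^ (2 * k) / fact (2 * k))
       = poisson_weight (c\<^sup>2 / (2 * \<sigma>\<^sup>2)) k * gamma_density (1/2 + real k) (1 / (2 * \<sigma>\<^sup>2)) w"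
proof -
  define \<beta> where "\<beta> = 1 / (2 * \<sigma>\<^sup>2)"
  define m where "m = c\<^sup>2 / (2 * \<sigma>\<^sup>2)"
  have \<beta>: "0 < \<beta>" using s by (simp add: \<beta>_def)
  have "\<beta> powr (1/2 + real k) = sqrt \<beta> * \<beta> ^ k"
    using \<beta> by (simp add: powr_add powr_half_sqrt powr_realpow)
  moreover have "w powr (1/2 + real k - 1) = w ^ k / sqrt w"
    using w by (simp add: powr_diff powr_half_sqrt powr_realpow)
  ultimately have gamma: "gamma_density (1/2 + real k) \<beta> w
      = sqrt \<beta> * \<beta> ^ k * 4 ^ k * fact k / (sqrt pi * fact (2 * k)) * (w ^ k / sqrt w) * exp (- \<beta> * w)"
    using w Gamma_nat_plus_half[of k] by (simp add: gamma_density_def add.commute)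
  have pow: "(c * sqrt w / \<sigma>\<^sup>2) ^ (2 * k) = (4 * m * \<beta> * w) ^ k"
    using w s unfolding power_mult m_def \<beta>_def by (simp add: power2_eq_square field_simps)
  have sqrt: "sqrt (2 * pi * \<sigma>\<^sup>2) = sqrt pi / sqrt \<beta>"
    using s unfolding \<beta>_def by (simp add: real_sqrt_mult real_sqrt_divide field_simps)
  have exp: "exp (- (w + c\<^sup>2) / (2 * \<sigma>\<^sup>2)) = exp (- m) * exp (- \<beta> * w)"
    using s unfolding m_def \<beta>_def by (simp add: exp_add[symmetric] field_simps)
  show ?thesis
    unfolding \<beta>_def[symmetric] m_def[symmetric] poisson_weight_def gamma pow sqrt exp
    using w \<beta> by (simp add: power_mult_distrib field_simps)
qed

lemma sums_square_density_normal:
  assumes w: "0 < w" and s: "0 < \<sigma>"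
  shows "(\<lambda>k. poisson_weight (c\<^sup>2 / (2 * \<sigma>\<^sup>2)) k * gamma_density (1/2 + real k) (1 / (2 * \<sigma>\<^sup>2)) w)
          sums square_density (normal_density c \<sigma>) w"
proof -
  define y where "y = c * sqrt w / \<sigma>\<^sup>2"
  define A where "A = exp (- (w + c\<^sup>2) / (2 * \<sigma>\<^sup>2)) / (sqrt (2 * pi * \<sigma>\<^sup>2) * sqrt w)"
  have "(\<lambda>k. A * (y ^ (2 * k) / fact (2 * k))) sums (A * cosh y)"
    by (rule sums_mult[OF sums_cosh_even])
  moreover have "A * cosh y = square_density (normal_density c \<sigma>) w"
  proof -
    have q1: "(sqrt w - c)\<^sup>2 = w + c\<^sup>2 - 2 * c * sqrt w"
      using w by (simp add: power2_eq_square algebra_simps)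
    have q2: "(- sqrt w - c)\<^sup>2 = w + c\<^sup>2 + 2 * c * sqrt w"
      using w by (simp add: power2_eq_square algebra_simps)
    have e1: "exp (- (sqrt w - c)\<^sup>2 / (2 * \<sigma>\<^sup>2)) = exp (- (w + c\<^sup>2) / (2 * \<sigma>\<^sup>2)) * exp y"
      using w s unfolding y_def q1 by (simp add: exp_add[symmetric] field_simps)
    have e2: "exp (- (- sqrt w - c)\<^sup>2 / (2 * \<sigma>\<^sup>2)) = exp (- (w + c\<^sup>2) / (2 * \<sigma>\<^sup>2)) * exp (- y)"
      using w s unfolding y_def q2 by (simp add: exp_add[symmetric] field_simps)
    show ?thesis
      using w s unfolding square_density_def normal_density_def A_def cosh_field_def e1 e2
      by (simp add: field_simps)
  qed
  ultimately show ?thesis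
    unfolding A_def y_def normal_cosh_term_eq_poisson_gamma[OF w s] by simp
qed

lemma square_density_normal:
  assumes s: "0 < \<sigma>"
  shows "ennreal (square_density (normal_density c \<sigma>) w) =
         (\<Sum>k. ennreal (poisson_weight (c\<^sup>2 / (2 * \<sigma>\<^sup>2)) k * gamma_density (1/2 + real k) (1 / (2 * \<sigma>\<^sup>2)) w))"
proof (cases "0 < w")
  case True
  show ?thesis
    by (rule suminf_ennreal_eq[symmetric])
       (auto intro!: mult_nonneg_nonneg poisson_weight_nonneg gamma_density_nonneg sums_square_density_normal[OF True s])
next
  case False
  then show ?thesis by (simp add: square_density_def gamma_density_def)
qed



lemma distr_normal_square:
  assumes "0 < \<sigma>"
  shows "distr (density lborel (normal_density c \<sigma>)) borel (\<lambda>v. v\<^sup>2)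
         = density lborel (poisson_gamma_density (1/2) (1 / (2 * \<sigma>\<^sup>2)) (c\<^sup>2 / (2 * \<sigma>\<^sup>2)))"
  using assms
  by (simp add: distr_square_density square_density_normal poisson_gamma_density_def[abs_def])


subsection \<open>Independence and kernels\<close>

lemma bind_distr_eq_distr_pair_measure:
  assumes N: "subprob_space N" and M: "space M \<noteq> {}"
    and f[measurable]: "case_prod f \<in> M \<Otimes>\<^sub>M N \<rightarrow>\<^sub>M L"
  shows "M \<bind> (\<lambda>y. distr N L (f y)) = distr (M \<Otimes>\<^sub>M N) L (case_prod f)"
proof (rule measure_eqI)
  interpret N: subprob_space N by fact
  have K: "(\<lambda>y. distr N L (f y)) \<in> M \<rightarrow>\<^sub>M subprob_algebra L"
    using N by (intro measurable_distr2[OF f]) (simp add: space_subprob_algebra)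
  show "sets (M \<bind> (\<lambda>y. distr N L (f y))) = sets (distr (M \<Otimes>\<^sub>M N) L (case_prod f))"
    using M by (subst sets_bind) auto
  fix A assume "A \<in> sets (M \<bind> (\<lambda>y. distr N L (f y)))"
  then have A[measurable]: "A \<in> sets L" using M by (subst (asm) sets_bind) auto
  have "emeasure (M \<bind> (\<lambda>y. distr N L (f y))) A = (\<integral>\<^sup>+y. emeasure (distr N L (f y)) A \<partial>M)"
    by (rule emeasure_bind[OF M K A])
  also have "\<dots> = (\<integral>\<^sup>+y. emeasure N (Pair y -` (case_prod f -` A \<inter> space (M \<Otimes>\<^sub>M N))) \<partial>M)"
  proof (rule nn_integral_cong)
    fix y assume y: "y \<in> space M"
    have "Pair y -` (case_prod f -` A \<inter> space (M \<Otimes>\<^sub>M N)) = f y -` A \<inter> space N"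
      using y by (auto simp: space_pair_measure)
    then show "emeasure (distr N L (f y)) A = emeasure N (Pair y -` (case_prod f -` A \<inter> space (M \<Otimes>\<^sub>M N)))"
      using measurable_Pair2[OF f y] by (simp add: emeasure_distr)
  qed
  also have "\<dots> = emeasure (M \<Otimes>\<^sub>M N) (case_prod f -` A \<inter> space (M \<Otimes>\<^sub>M N))"
    by (rule sigma_finite_measure.emeasure_pair_measure_alt[OF subprob_space_imp_sigma_finite[OF N], symmetric])
       simp
  also have "\<dots> = emeasure (distr (M \<Otimes>\<^sub>M N) L (case_prod f)) A"
    by (rule emeasure_distr[symmetric, OF f A])
  finally show "emeasure (M \<bind> (\<lambda>y. distr N L (f y))) A = emeasure (distr (M \<Otimes>\<^sub>M N) L (case_prod f)) A" .
qed

lemma distr_pair_measure_plus_eq_convolution: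
  assumes P: "prob_space P" and Q: "prob_space Q"
    and f[measurable]: "f \<in> borel_measurable P" and g[measurable]: "g \<in> borel_measurable Q"
  shows "distr (P \<Otimes>\<^sub>M Q) borel (\<lambda>(y, z). f y + (g z :: real)) = (distr P borel f \<star> distr Q borel g)"
proof -
  have "sigma_finite_measure (distr Q borel g)"
    by (rule prob_space_imp_sigma_finite, rule prob_space.prob_space_distr[OF Q g])
  then have "(distr P borel f \<star> distr Q borel g)
      = distr (distr (P \<Otimes>\<^sub>M Q) (borel \<Otimes>\<^sub>M borel) (\<lambda>(x, y). (f x, g y))) borel (\<lambda>(x, y). x + y)"
    unfolding convolution_def by (subst pair_measure_distr[OF f g]) simp_all
  also have "\<dots> = distr (P \<Otimes>\<^sub>M Q) borel (\<lambda>(y, z). f y + g z)"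
    by (subst distr_distr) (auto simp: comp_def case_prod_unfold)
  finally show ?thesis ..
qed

lemma (in prob_space) distr_indep_eq_bind:
  assumes X[measurable]: "X \<in> M \<rightarrow>\<^sub>M N1" and Y[measurable]: "Y \<in> M \<rightarrow>\<^sub>M N2"
    and indep: "distr M (N1 \<Otimes>\<^sub>M N2) (\<lambda>\<omega>. (X \<omega>, Y \<omega>)) = distr M N1 X \<Otimes>\<^sub>M distr M N2 Y"
    and f[measurable]: "case_prod f \<in> N1 \<Otimes>\<^sub>M N2 \<rightarrow>\<^sub>M L"
  shows "distr M L (\<lambda>\<omega>. f (X \<omega>) (Y \<omega>)) = distr M N1 X \<bind> (\<lambda>x. distr M L (\<lambda>\<omega>. f x (Y \<omega>)))"
proof -
  have f': "case_prod f \<in> distr M N1 X \<Otimes>\<^sub>M distr M N2 Y \<rightarrow>\<^sub>M L"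
    using f by (simp add: indep[symmetric])
  have "distr M L (\<lambda>\<omega>. f (X \<omega>) (Y \<omega>)) = distr (distr M N1 X \<Otimes>\<^sub>M distr M N2 Y) L (case_prod f)"
    unfolding indep[symmetric] by (subst distr_distr) (auto simp: comp_def)
  also have "\<dots> = distr M N1 X \<bind> (\<lambda>x. distr (distr M N2 Y) L (f x))"
    using not_empty
    by (intro bind_distr_eq_distr_pair_measure[symmetric, OF _ _ f'] prob_space_imp_subprob_space
        prob_space_distr) (auto dest: measurable_space[OF X])
  also have "\<dots> = distr M N1 X \<bind> (\<lambda>x. distr M L (\<lambda>\<omega>. f x (Y \<omega>)))"
    using measurable_Pair2[OF f] by (intro bind_cong refl) (simp add: distr_distr comp_def)
  finally show ?thesis .
qed

lemma (in prob_space) distr_pair_indep_var_compose: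
  assumes indep: "indep_var M1 A M2 B" and g1[measurable]: "g1 \<in> M1 \<rightarrow>\<^sub>M N1" and g2[measurable]: "g2 \<in> M2 \<rightarrow>\<^sub>M N2"
  shows "distr M (N1 \<Otimes>\<^sub>M N2) (\<lambda>\<omega>. (g1 (A \<omega>), g2 (B \<omega>))) = distr M N1 (\<lambda>\<omega>. g1 (A \<omega>)) \<Otimes>\<^sub>M distr M N2 (\<lambda>\<omega>. g2 (B \<omega>))"
proof -
  have A[measurable]: "A \<in> M \<rightarrow>\<^sub>M M1" and B[measurable]: "B \<in> M \<rightarrow>\<^sub>M M2"
    and joint: "distr M M1 A \<Otimes>\<^sub>M distr M M2 B = distr M (M1 \<Otimes>\<^sub>M M2) (\<lambda>\<omega>. (A \<omega>, B \<omega>))"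
    using indep unfolding indep_var_distribution_eq by auto
  have "sigma_finite_measure (distr (distr M M2 B) N2 g2)"
    by (intro prob_space_imp_sigma_finite prob_space.prob_space_distr prob_space_distr) simp_all
  then have "distr M N1 (\<lambda>\<omega>. g1 (A \<omega>)) \<Otimes>\<^sub>M distr M N2 (\<lambda>\<omega>. g2 (B \<omega>))
      = distr (distr M M1 A \<Otimes>\<^sub>M distr M M2 B) (N1 \<Otimes>\<^sub>M N2) (\<lambda>(a, b). (g1 a, g2 b))"
    by (subst pair_measure_distr[symmetric]) (simp_all add: distr_distr comp_def)
  also have "\<dots> = distr M (N1 \<Otimes>\<^sub>M N2) (\<lambda>\<omega>. (g1 (A \<omega>), g2 (B \<omega>)))"
    unfolding joint by (subst distr_distr) (auto simp: comp_def)
  finally show ?thesis ..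
qed

lemma (in prob_space) indep_vars_three:
  assumes indep: "indep_vars (\<lambda>_. N) (\<lambda>i. [X, Y, Z] ! i) {0, 1, 2 :: nat}"
  shows "distr M (N \<Otimes>\<^sub>M (N \<Otimes>\<^sub>M N)) (\<lambda>\<omega>. (X \<omega>, (Y \<omega>, Z \<omega>))) = distr M N X \<Otimes>\<^sub>M distr M (N \<Otimes>\<^sub>M N) (\<lambda>\<omega>. (Y \<omega>, Z \<omega>))"
    and "indep_var N Y N Z"
proof -
  let ?R = "\<lambda>I \<omega>. restrict (\<lambda>i. ([X, Y, Z] ! i) \<omega>) I"
  have "indep_var (PiM {0} (\<lambda>_. N)) (?R {0}) (PiM {1, 2} (\<lambda>_. N)) (?R {1, 2})"
    by (rule indep_var_restrict[OF indep]) auto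
  from distr_pair_indep_var_compose[OF this, of "\<lambda>f. f 0" N "\<lambda>f. (f 1, f 2)" "N \<Otimes>\<^sub>M N"]
  show "distr M (N \<Otimes>\<^sub>M (N \<Otimes>\<^sub>M N)) (\<lambda>\<omega>. (X \<omega>, (Y \<omega>, Z \<omega>))) = distr M N X \<Otimes>\<^sub>M distr M (N \<Otimes>\<^sub>M N) (\<lambda>\<omega>. (Y \<omega>, Z \<omega>))"
    by simp
  have "indep_var (PiM {1} (\<lambda>_. N)) (?R {1}) (PiM {2} (\<lambda>_. N)) (?R {2})"
    by (rule indep_var_restrict[OF indep]) auto
  from indep_var_compose[OF this, of "\<lambda>f. f 1" N "\<lambda>f. f 2" N]
  show "indep_var N Y N Z"
    by (simp add: comp_def)
qed


subsection \<open>The two sides of the identity\<close>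

lemma smart_path_given_count:
  assumes a: "0 < \<alpha>" and l: "0 < lam" and t: "0 < \<tau>" "\<tau> < 1"
  shows "(if k = 0 then return borel 0 else gamma_measure (real k) (lam * \<tau> / (1 - \<tau>))) \<bind>
           (\<lambda>y. gamma_measure \<alpha> lam \<bind> (\<lambda>g. return borel ((1 - \<tau>) * g + \<tau> * y)))
         = gamma_measure (\<alpha> + real k) (lam / (1 - \<tau>))"
proof -
  have t1: "0 < 1 - \<tau>" using t by simp
  have inner: "gamma_measure \<alpha> lam \<bind> (\<lambda>g. return borel ((1 - \<tau>) * g + \<tau> * y))
      = distr (gamma_measure \<alpha> lam) borel (\<lambda>g. (1 - \<tau>) * g + \<tau> * y)" for y
    by (rule bind_return_distr') simp_all
  have scale: "distr (gamma_measure \<alpha> lam) borel (\<lambda>g. (1 - \<tau>) * g) = gamma_measure \<alpha> (lam / (1 - \<tau>))"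
    by (rule distr_mult_gamma_measure[OF l t1])
  show ?thesis
  proof (cases "k = 0")
    case True
    have "(\<lambda>y. distr (gamma_measure \<alpha> lam) borel (\<lambda>g. (1 - \<tau>) * g + \<tau> * y)) \<in> borel \<rightarrow>\<^sub>M subprob_algebra borel"
      using gamma_measure_in_subprob_algebra[OF a l] by (intro measurable_distr2[where M=borel]) simp_all
    from bind_return[OF this, of 0] show ?thesis unfolding inner using True scale by simp
  next
    case False
    let ?Y = "gamma_measure (real k) (lam * \<tau> / (1 - \<tau>))"
    have k: "0 < real k" using False by simp
    have r: "0 < lam * \<tau> / (1 - \<tau>)" using l t t1 by simp
    have scale': "distr ?Y borel (\<lambda>y. \<tau> * y) = gamma_measure (real k) (lam / (1 - \<tau>))"
      using distr_mult_gamma_measure[OF r t(1), of "real k"] t by simp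
    have "?Y \<bind> (\<lambda>y. distr (gamma_measure \<alpha> lam) borel (\<lambda>g. (1 - \<tau>) * g + \<tau> * y))
        = distr (?Y \<Otimes>\<^sub>M gamma_measure \<alpha> lam) borel (\<lambda>(y, g). \<tau> * y + (1 - \<tau>) * g)"
      using prob_space_gamma_measure[OF a l]
      by (subst bind_distr_eq_distr_pair_measure[where f="\<lambda>y g. (1 - \<tau>) * g + \<tau> * y"])
         (auto simp: prob_space_imp_subprob_space add.commute intro!: distr_cong)
    also have "\<dots> = (gamma_measure (real k) (lam / (1 - \<tau>)) \<star> gamma_measure \<alpha> (lam / (1 - \<tau>)))"
      unfolding scale[symmetric] scale'[symmetric]
      by (rule distr_pair_measure_plus_eq_convolution[OF prob_space_gamma_measure[OF k r] prob_space_gamma_measure[OF a l]])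
         simp_all
    also have "\<dots> = gamma_measure (\<alpha> + real k) (lam / (1 - \<tau>))"
      using k a l t1 by (subst convolution_gamma_measure) (simp_all add: add.commute)
    finally show ?thesis using False unfolding inner by simp
  qed
qed

lemma smart_path_law_eq_bind:
  assumes "0 < \<alpha>" and "0 < lam" and "0 < \<tau>" "\<tau> < 1"
  shows "smart_path_law \<alpha> lam \<tau> \<mu> =
         \<mu> \<bind> (\<lambda>x. density lborel (poisson_gamma_density \<alpha> (lam / (1 - \<tau>)) (max 0 (lam * \<tau> * x / (1 - \<tau>)))))"
  using assms
  by (simp add: smart_path_law_def smart_path_given_count poisson_law_bind_gamma_measure)

lemma distr_borel_eq_distr_lborel: "distr M borel f = distr M lborel f"
  by (rule distr_cong) simp_all

text \<open>Isabelle's \<open>sqrt\<close> is odd, so \<open>(sqrt x)\<^sup>2 = \<bar>x\<bar>\<close>; hence the \<open>\<bar>x\<bar>\<close> in the mixing mean.\<close>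
lemma (in prob_space) distr_normal_square_plus_gamma:
  assumes a: "1/2 < \<alpha>" and l: "0 < lam" and t: "0 < \<tau>" "\<tau> < 1"
    and indep: "indep_var borel Z borel G"
    and Z: "distributed M lborel Z std_normal_density"
    and G: "distributed M lborel G (gamma_density (\<alpha> - 1/2) lam)"
  shows "distr M borel (\<lambda>\<omega>. (1 - \<tau>) * G \<omega> + (sqrt \<tau> * sqrt x + sqrt ((1 - \<tau>) / (2 * lam)) * Z \<omega>)\<^sup>2)
         = density lborel (poisson_gamma_density \<alpha> (lam / (1 - \<tau>)) (lam * \<tau> * \<bar>x\<bar> / (1 - \<tau>)))"
proof -
  define s where "s = sqrt ((1 - \<tau>) / (2 * lam))"
  define c where "c = sqrt \<tau> * sqrt x"
  define \<beta> where "\<beta> = lam / (1 - \<tau>)"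
  define m where "m = lam * \<tau> * \<bar>x\<bar> / (1 - \<tau>)"
  have t1: "0 < 1 - \<tau>" using t by simp
  have s: "0 < s" using t1 l by (simp add: s_def)
  have \<beta>: "0 < \<beta>" "1 / (2 * s\<^sup>2) = \<beta>" using l t1 by (simp_all add: s_def \<beta>_def field_simps)
  have m: "0 \<le> m" "c\<^sup>2 / (2 * s\<^sup>2) = m"
    using l t t1 by (simp_all add: s_def c_def m_def power_mult_distrib power2_eq_square field_simps)
  have [measurable]: "Z \<in> borel_measurable M" "G \<in> borel_measurable M"
    using distributed_measurable[OF Z] distributed_measurable[OF G] by simp_all
  have "distributed M lborel (\<lambda>\<omega>. c + s * Z \<omega>) (normal_density (c + s * 0) (\<bar>s\<bar> * 1))"
    by (rule normal_density_affine[OF Z]) (use s in simp_all)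
  then have "distr M borel (\<lambda>\<omega>. c + s * Z \<omega>) = density lborel (normal_density c s)"
    using s by (simp add: distributed_distr_eq_density distr_borel_eq_distr_lborel)
  have "distr M borel (\<lambda>\<omega>. (c + s * Z \<omega>)\<^sup>2) = distr (distr M borel (\<lambda>\<omega>. c + s * Z \<omega>)) borel (\<lambda>v. v\<^sup>2)"
    by (subst distr_distr) (auto simp: comp_def)
  also note \<open>distr M borel (\<lambda>\<omega>. c + s * Z \<omega>) = density lborel (normal_density c s)\<close>
  finally have square: "distr M borel (\<lambda>\<omega>. (c + s * Z \<omega>)\<^sup>2) = density lborel (poisson_gamma_density (1/2) \<beta> m)"
    using s \<beta> m by (simp add: distr_normal_square)
  have "distr M borel (\<lambda>\<omega>. (1 - \<tau>) * G \<omega>) = distr (distr M borel G) borel (\<lambda>g. (1 - \<tau>) * g)"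
    by (subst distr_distr) (auto simp: comp_def)
  also have "distr M borel G = gamma_measure (\<alpha> - 1/2) lam"
    using distributed_distr_eq_density[OF G] by (simp add: gamma_measure_def distr_borel_eq_distr_lborel)
  finally have gamma: "distr M borel (\<lambda>\<omega>. (1 - \<tau>) * G \<omega>) = gamma_measure (\<alpha> - 1/2) \<beta>"
    unfolding \<beta>_def by (simp add: distr_mult_gamma_measure[OF l t1])
  have "indep_var borel ((\<lambda>z. (c + s * z)\<^sup>2) \<circ> Z) borel ((\<lambda>g. (1 - \<tau>) * g) \<circ> G)"
    by (rule indep_var_compose[OF indep]) simp_all
  then have "distr M borel (\<lambda>\<omega>. (c + s * Z \<omega>)\<^sup>2 + (1 - \<tau>) * G \<omega>)
      = (density lborel (poisson_gamma_density (1/2) \<beta> m) \<star> gamma_measure (\<alpha> - 1/2) \<beta>)"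
    unfolding square[symmetric] gamma[symmetric] by (subst sum_indep_random_variable) (simp_all add: comp_def)
  also have "\<dots> = density lborel (poisson_gamma_density \<alpha> \<beta> m)"
    using a \<beta> m by (subst convolution_poisson_gamma_density) simp_all
  finally show ?thesis
    unfolding s_def[symmetric] c_def[symmetric] \<beta>_def[symmetric] m_def[symmetric]
    by (simp add: add.commute cong: distr_cong)
qed


theorem corollary2p5:
  fixes M :: "'a measure" and X Z G :: "'a \<Rightarrow> real" and \<alpha> lam \<tau> :: real
  assumes "prob_space M"
    and "\<alpha> > 1/2" and "lam > 0" and "0 < \<tau>" and "\<tau> < 1"
    and "X \<in> borel_measurable M" and "AE \<omega> in M. X \<omega> > 0"
    and "distributed M lborel Z std_normal_density"
    and "distributed M lborel G (gamma_density (\<alpha> - 1/2) lam)"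
    and "prob_space.indep_vars M (\<lambda>_. borel) (\<lambda>i. [X, Z, G] ! i) {0, 1, 2}"
  shows "smart_path_law \<alpha> lam \<tau> (distr M borel X) =
         distr M borel (\<lambda>\<omega>. (1 - \<tau>) * G \<omega>
            + (sqrt \<tau> * sqrt (X \<omega>) + sqrt ((1 - \<tau>) / (2 * lam)) * Z \<omega>)\<^sup>2)"
proof -
  interpret prob_space M by fact
  let ?mix = "\<lambda>m. density lborel (poisson_gamma_density \<alpha> (lam / (1 - \<tau>)) m)"
  have [measurable]: "X \<in> borel_measurable M" "Z \<in> borel_measurable M" "G \<in> borel_measurable M"
    using assms(6) distributed_measurable[OF assms(8)] distributed_measurable[OF assms(9)] by simp_all
  note indep = indep_vars_three[OF assms(10)]
  have "smart_path_law \<alpha> lam \<tau> (distr M borel X) = distr M borel X \<bind> (\<lambda>x. ?mix (max 0 (lam * \<tau> * x / (1 - \<tau>))))"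
    using assms by (simp add: smart_path_law_eq_bind)
  also have "\<dots> = distr M borel X \<bind> (\<lambda>x. ?mix (lam * \<tau> * \<bar>x\<bar> / (1 - \<tau>)))"
  proof (rule bind_cong_AE[OF refl, where B=borel])
    have "AE x in distr M borel X. 0 < x"
      using assms(7) by (subst AE_distr_iff) simp_all
    then show "AE x in distr M borel X. ?mix (max 0 (lam * \<tau> * x / (1 - \<tau>))) = ?mix (lam * \<tau> * \<bar>x\<bar> / (1 - \<tau>))"
      by eventually_elim (use assms in simp)
  qed (use assms in \<open>intro measurable_poisson_gamma_density_kernel; simp\<close>)+
  also have "\<dots> = distr M borel X \<bind> (\<lambda>x. distr M borel (\<lambda>\<omega>. (1 - \<tau>) * G \<omega>
            + (sqrt \<tau> * sqrt x + sqrt ((1 - \<tau>) / (2 * lam)) * Z \<omega>)\<^sup>2))"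
    using assms indep(2) by (simp add: distr_normal_square_plus_gamma)
  also have "\<dots> = distr M borel (\<lambda>\<omega>. (1 - \<tau>) * G \<omega>
            + (sqrt \<tau> * sqrt (X \<omega>) + sqrt ((1 - \<tau>) / (2 * lam)) * Z \<omega>)\<^sup>2)"
    by (rule distr_indep_eq_bind[OF _ _ indep(1), symmetric, where f="\<lambda>x (z, g). (1 - \<tau>) * g
            + (sqrt \<tau> * sqrt x + sqrt ((1 - \<tau>) / (2 * lam)) * z)\<^sup>2", simplified]) simp_all
  finally show ?thesis .
qed

end
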